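(* Let $H=(V,E,\omega,d)$ be a generalized hypergraph with $V=\{1,\dots,n\}$. For every $\rho\in R_n$ there exist vectors $v_1(z),\dots,v_k(z)\in K(z)^n$, whose entries have no pole at any positive real $z$, such that for every $\lambda>0$ $$\overline{G_\lambda(U_\rho)}=\sum_{i=1}^k\mathbb{R}_{\ge0}\,v_i(\lambda),$$ where $G_\lambda(U_\rho)=\bigcup_{f\in U_\rho}G_\lambda(f)$ and the bar denotes topological closure in $\mathbb{R}^n$.
   Context: A generalized hypergraph $H=(V,E,\omega,d)$ consists of a finite set $V=\{1,\dots,n\}$, a set $E$ of nonempty subsets of $V$, a function $\omega\colon E\to\mathbb{R}_{>0}$ and a function $d\colon V\to\mathbb{R}_{>0}$, $x\mapsto d_x$ (no relation between $d$ and $\omega$ is assumed). Functions $V\to\mathbb{R}$ are identified with vectors $f=(f_1,\dots,f_n)^\top\in\mathbb{R}^n$; $\delta_x$ is the $x$-th standard basis vector. For $e\in E$, $B_e=\mathrm{Conv}\{\delta_x-\delta_y : x,y\in e\}$, and $L(f)=\{\sum_{e\in E}\omega_e\mathtt{b}_e(\mathtt{b}_e^\top f) : \mathtt{b}_e\in\operatorname{argmax}_{\mathtt b\in B_e}\mathtt b^\top f\}\subset\mathbb{R}^n$. $D=\mathrm{diag}(d_1,\dots,d_n)$. $\mathbb{R}^n=\bigsqcup_{\rho\in R_n}U_\rho$ is the partition into order-pattern classes: $f,g$ lie in the same $U_\rho$ iff $\mathrm{sgn}(f_x-f_y)=\mathrm{sgn}(g_x-g_y)$ for all $x,y\in V$.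 $K=\mathbb{Q}(\{\omega_e\}_{e\in E},\{d_x\}_{x\in V})\subset\mathbb{R}$, and $K(z)$ is the field of rational functions in $z$ over $K$. For $\lambda>0$, $G_\lambda(f)=(D+\lambda L)(f)=\{Df+\lambda v: v\in L(f)\}$. *)

theory Defs
  imports "HOL-Analysis.Analysis" "HOL-Computational_Algebra.Polynomial"
begin

text \<open>Vertex set V = {1..n} is represented by a finite type 'n; functions V -> R are
  vectors of type real^'n.\<close>

definition is_gen_hypergraph :: "'n::finite set set \<Rightarrow> ('n set \<Rightarrow> real) \<Rightarrow> ('n \<Rightarrow> real) \<Rightarrow> bool" where
  "is_gen_hypergraph E w d \<longleftrightarrow> (\<forall>e\<in>E. e \<noteq> {} \<and> w e > 0) \<and> (\<forall>x. d x > 0)"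

definition Bset :: "'n::finite set \<Rightarrow> (real^'n) set" where
  "Bset e = convex hull {axis x 1 - axis y 1 | x y. x \<in> e \<and> y \<in> e}"

definition argmaxB :: "'n::finite set \<Rightarrow> real^'n \<Rightarrow> (real^'n) set" where
  "argmaxB e f = {b \<in> Bset e. \<forall>b'\<in>Bset e. b' \<bullet> f \<le> b \<bullet> f}"

definition Lap :: "'n::finite set set \<Rightarrow> ('n set \<Rightarrow> real) \<Rightarrow> real^'n \<Rightarrow> (real^'n) set" where
  "Lap E w f = {(\<Sum>e\<in>E. w e *\<^sub>R ((b e \<bullet> f) *\<^sub>R b e)) | b. \<forall>e\<in>E. b e \<in> argmaxB e f}"

definition Dmat :: "('n::finite \<Rightarrow> real) \<Rightarrow> real^'n \<Rightarrow> real^'n" where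
  "Dmat d f = (\<chi> x. d x * f $ x)"

definition Gop :: "'n::finite set set \<Rightarrow> ('n set \<Rightarrow> real) \<Rightarrow> ('n \<Rightarrow> real) \<Rightarrow> real \<Rightarrow> real^'n \<Rightarrow> (real^'n) set" where
  "Gop E w d lam f = {Dmat d f + lam *\<^sub>R v | v. v \<in> Lap E w f}"

definition order_classes :: "(real^'n::finite) set set" where
  "order_classes = {{g. \<forall>x y. sgn (g $ x - g $ y) = sgn (f $ x - f $ y)} | f. True}"

definition real_subfield :: "real set \<Rightarrow> bool" where
  "real_subfield S \<longleftrightarrow> 0 \<in> S \<and> 1 \<in> S \<and> (\<forall>a\<in>S. \<forall>b\<in>S. a + b \<in> S \<and> a * b \<in> S \<and> - a \<in> S)
     \<and> (\<forall>a\<in>S. a \<noteq> 0 \<longrightarrow> inverse a \<in> S)"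

definition Kfield :: "'n::finite set set \<Rightarrow> ('n set \<Rightarrow> real) \<Rightarrow> ('n \<Rightarrow> real) \<Rightarrow> real set" where
  "Kfield E w d = \<Inter>{S. real_subfield S \<and> w ` E \<subseteq> S \<and> range d \<subseteq> S}"

definition poly_over :: "real set \<Rightarrow> real poly \<Rightarrow> bool" where
  "poly_over S p \<longleftrightarrow> (\<forall>j. coeff p j \<in> S)"

end

theory Submission
  imports Defs
begin

text \<open>For \<open>f \<in> U\<^sub>\<rho>\<close> the maximisers of \<open>b \<mapsto> b\<^sup>T f\<close> on \<open>B\<^sub>e\<close> depend only on \<open>\<rho>\<close>: they form
  the face \<open>A\<^sub>e\<close> spanned by the \<open>\<delta>\<^sub>x - \<delta>\<^sub>y\<close> with \<open>x\<close> highest and \<open>y\<close> lowest on \<open>e\<close> for \<open>\<rho>\<close>,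
  and the maximum \<open>f\<^sub>x - f\<^sub>y\<close> is linear in \<open>f\<close>. So \<open>G\<^sub>\<lambda>(U\<^sub>\<rho>)\<close> consists of the vectors
  \<open>Df + \<lambda> \<Sum>\<^sub>e \<omega>\<^sub>e (f\<^sub>x - f\<^sub>y) b\<^sub>e\<close> with \<open>b\<^sub>e \<in> A\<^sub>e\<close>. Letting \<open>f\<close> range over the closure of
  \<open>U\<^sub>\<rho>\<close>, the cone of \<open>\<rho>\<close>-monotone functions, gives a set between \<open>G\<^sub>\<lambda>(U\<^sub>\<rho>)\<close> and its closure,
  and this set is a convex cone because the spreads \<open>f\<^sub>x - f\<^sub>y\<close> are nonnegative and additive there.
  The monotone cone is generated by \<open>\<plusminus>1\<close> and the indicators of upper sets of \<open>\<rho>\<close>, so the cone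
  is generated by finitely many vectors \<open>a + \<lambda> b\<close> with \<open>a\<close>, \<open>b\<close> having entries in \<open>K\<close>;
  being finitely generated, it is closed.\<close>

lemma sum_scaled_in_convex_hull_PiE:
  fixes b :: "'i \<Rightarrow> 'v::real_vector"
  assumes "finite I" and "\<And>i. i \<in> I \<Longrightarrow> b i \<in> convex hull (B i)"
  shows "(\<Sum>i\<in>I. c i *\<^sub>R b i) \<in> convex hull ((\<lambda>p. \<Sum>i\<in>I. c i *\<^sub>R p i) ` PiE I B)"
proof -
  have "(\<Sum>i\<in>I. c i *\<^sub>R b i) \<in> (\<Sum>i\<in>I. convex hull ((\<lambda>v. c i *\<^sub>R v) ` B i))"
    using assms by (auto simp: set_sum_alt convex_hull_scaling)
  also have "\<dots> = convex hull (\<Sum>i\<in>I. (\<lambda>v. c i *\<^sub>R v) ` B i)"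
    by (rule convex_hull_set_sum[symmetric])
  also have "(\<Sum>i\<in>I. (\<lambda>v. c i *\<^sub>R v) ` B i) \<subseteq> (\<lambda>p. \<Sum>i\<in>I. c i *\<^sub>R p i) ` PiE I B"
  proof
    fix s assume "s \<in> (\<Sum>i\<in>I. (\<lambda>v. c i *\<^sub>R v) ` B i)"
    then obtain t where s: "s = sum t I" and t: "\<forall>i\<in>I. t i \<in> (\<lambda>v. c i *\<^sub>R v) ` B i"
      using assms(1) by (auto simp: set_sum_alt)
    then obtain p where p: "\<forall>i\<in>I. p i \<in> B i \<and> t i = c i *\<^sub>R p i"
      using bchoice[of I "\<lambda>i v. v \<in> B i \<and> t i = c i *\<^sub>R v"] by blast
    have "restrict p I \<in> PiE I B" using p by auto
    moreover have "s = (\<Sum>i\<in>I. c i *\<^sub>R restrict p I i)" using p s by simp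
    ultimately show "s \<in> (\<lambda>p. \<Sum>i\<in>I. c i *\<^sub>R p i) ` PiE I B" by blast
  qed
  then have "convex hull (\<Sum>i\<in>I. (\<lambda>v. c i *\<^sub>R v) ` B i) \<subseteq> convex hull ((\<lambda>p. \<Sum>i\<in>I. c i *\<^sub>R p i) ` PiE I B)"
    by (rule hull_mono)
  finally show ?thesis .
qed

lemma convex_hull_Int_supporting_hyperplane:
  fixes S :: "'a::euclidean_space set"
  assumes "finite S" and "\<And>x. x \<in> S \<Longrightarrow> a \<bullet> x \<le> c"
  shows "convex hull S \<inter> {x. a \<bullet> x = c} = convex hull (S \<inter> {x. a \<bullet> x = c})"
proof
  have "convex hull S \<subseteq> {x. a \<bullet> x \<le> c}"
    using assms(2) by (intro hull_minimal) (auto simp: convex_halfspace_le)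
  then have "(convex hull S \<inter> {x. a \<bullet> x = c}) face_of convex hull S"
    by (intro face_of_Int_supporting_hyperplane_le) auto
  then obtain S' where S': "S' \<subseteq> S" "convex hull S \<inter> {x. a \<bullet> x = c} = convex hull S'"
    using face_of_convex_hull_subset finite_imp_compact[OF assms(1)] by metis
  have "S' \<subseteq> {x. a \<bullet> x = c}" using S'(2) hull_subset[of S' convex] by blast
  then show "convex hull S \<inter> {x. a \<bullet> x = c} \<subseteq> convex hull (S \<inter> {x. a \<bullet> x = c})"
    unfolding S'(2) using S'(1) by (intro hull_mono) blast
next
  show "convex hull (S \<inter> {x. a \<bullet> x = c}) \<subseteq> convex hull S \<inter> {x. a \<bullet> x = c}"
    by (intro Int_greatest hull_mono hull_minimal) (auto simp: convex_hyperplane)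
qed

lemma convex_cone_sum:
  assumes "convex_cone C" and "\<And>i. i \<in> I \<Longrightarrow> v i \<in> C"
  shows "sum v I \<in> C"
  using assms(2)
  by (induction I rule: infinite_finite_induct) (use assms(1) in \<open>auto simp: convex_cone_iff\<close>)

lemma convex_cone_hull_finite_image:
  fixes g :: "nat \<Rightarrow> 'a::real_vector"
  shows "convex_cone hull (g ` {..<k}) = {(\<Sum>i<k. c i *\<^sub>R g i) | c. \<forall>i<k. c i \<ge> 0}"
    (is "_ = ?C")
proof
  have "convex_cone ?C" unfolding convex_cone_iff
  proof (intro conjI ballI allI impI)
    show "0 \<in> ?C" by (intro CollectI exI[of _ "\<lambda>i. 0"]) simp
  next
    fix x y assume "x \<in> ?C" "y \<in> ?C"
    then obtain c1 c2 where "x = (\<Sum>i<k. c1 i *\<^sub>R g i)" "\<forall>i<k. c1 i \<ge> 0"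
      "y = (\<Sum>i<k. c2 i *\<^sub>R g i)" "\<forall>i<k. c2 i \<ge> 0" by blast
    then show "x + y \<in> ?C"
      by (intro CollectI exI[of _ "\<lambda>i. c1 i + c2 i"]) (simp add: scaleR_add_left sum.distrib)
  next
    fix x and a :: real assume "x \<in> ?C" "a \<ge> 0"
    then obtain c where "x = (\<Sum>i<k. c i *\<^sub>R g i)" "\<forall>i<k. c i \<ge> 0" by blast
    with \<open>a \<ge> 0\<close> show "a *\<^sub>R x \<in> ?C"
      by (intro CollectI exI[of _ "\<lambda>i. a * c i"]) (simp add: scaleR_sum_right)
  qed
  moreover have "g j \<in> ?C" if "j < k" for j
  proof -
    have "(\<Sum>i<k. (if i = j then 1 else 0) *\<^sub>R g i) = g j"
      using that by (simp add: if_distrib[of "\<lambda>c. c *\<^sub>R _"] cong: if_cong)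
    then show ?thesis by (intro CollectI exI[of _ "\<lambda>i. if i = j then 1 else 0"]) auto
  qed
  ultimately show "convex_cone hull (g ` {..<k}) \<subseteq> ?C"
    by (intro hull_minimal) auto
next
  show "?C \<subseteq> convex_cone hull (g ` {..<k})"
  proof
    fix z assume "z \<in> ?C"
    then obtain c where z: "z = (\<Sum>i<k. c i *\<^sub>R g i)" and c: "\<forall>i<k. c i \<ge> 0" by blast
    have "c i *\<^sub>R g i \<in> convex_cone hull (g ` {..<k})" if "i < k" for i
      using c that by (intro convex_cone_hull_mul hull_inc) auto
    then show "z \<in> convex_cone hull (g ` {..<k})"
      unfolding z by (intro convex_cone_sum convex_cone_convex_cone_hull) auto
  qed
qed

lemma convex_weighted_sum:
  assumes "convex S" "u \<in> S" "v \<in> S" "0 \<le> a" "0 \<le> c"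
  obtains z where "z \<in> S" "(a + c) *\<^sub>R z = a *\<^sub>R u + c *\<^sub>R v"
proof (cases "a + c = 0")
  case True
  then have "a = 0" "c = 0" using assms(4,5) by linarith+
  then show ?thesis using assms(2) that[of u] by simp
next
  case False
  then have "a / (a + c) + c / (a + c) = 1" by (simp add: add_divide_distrib[symmetric])
  then have "(a / (a + c)) *\<^sub>R u + (c / (a + c)) *\<^sub>R v \<in> S"
    using assms by (intro convexD) auto
  moreover have "(a + c) *\<^sub>R ((a / (a + c)) *\<^sub>R u + (c / (a + c)) *\<^sub>R v) = a *\<^sub>R u + c *\<^sub>R v"
    using False by (simp add: scaleR_add_right)
  ultimately show ?thesis by (rule that)
qed

lemma sgn_add_scaled:
  fixes a t \<epsilon> :: real
  assumes "0 < \<epsilon>" "t \<le> 0 \<Longrightarrow> a \<le> 0" "0 \<le> t \<Longrightarrow> 0 \<le> a"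
  shows "sgn (a + \<epsilon> * t) = sgn t"
proof (cases t "0::real" rule: linorder_cases)
  case less
  then have "\<epsilon> * t < 0" using assms(1) by (simp add: mult_pos_neg)
  then show ?thesis using less assms(2) by simp
next
  case greater
  then have "\<epsilon> * t > 0" using assms(1) by simp
  then show ?thesis using greater assms(3) by simp
qed (use assms in simp)

lemma finite_ex_max_on:
  fixes f :: "'a \<Rightarrow> 'b::linorder"
  assumes "finite S" "S \<noteq> {}"
  shows "\<exists>x\<in>S. \<forall>y\<in>S. f y \<le> f x"
  using Max_in[of "f ` S"] Max_ge[of "f ` S"] assms by fastforce

lemma finite_ex_min_on:
  fixes f :: "'a \<Rightarrow> 'b::linorder"
  assumes "finite S" "S \<noteq> {}"
  shows "\<exists>x\<in>S. \<forall>y\<in>S. f x \<le> f y"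
  using Min_in[of "f ` S"] Min_le[of "f ` S"] assms by fastforce

lemma real_subfield_Ints:
  assumes "real_subfield S" and "a \<in> \<int>"
  shows "a \<in> S"
proof -
  have "of_int n \<in> S" for n :: int
  proof (induction n rule: int_induct[where k=0])
    case (step2 i)
    have "of_int (i - 1) = of_int i + - (1::real)" by simp
    then show ?case using step2 assms(1) unfolding real_subfield_def by metis
  qed (use assms(1) in \<open>simp_all add: real_subfield_def\<close>)
  then show ?thesis using assms(2) by (auto elim: Ints_cases)
qed

lemma real_subfield_sum:
  assumes "real_subfield S" and "\<And>i. i \<in> I \<Longrightarrow> f i \<in> S"
  shows "sum f I \<in> S"
  using assms(2)
  by (induction I rule: infinite_finite_induct) (use assms(1) in \<open>simp_all add: real_subfield_def\<close>)

lemma real_subfield_Kfield: "real_subfield (Kfield E w d)"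
  unfolding Kfield_def real_subfield_def by auto

lemma edge_weight_in_Kfield: "e \<in> E \<Longrightarrow> w e \<in> Kfield E w d"
  unfolding Kfield_def by blast

lemma vertex_weight_in_Kfield: "d x \<in> Kfield E w d"
  unfolding Kfield_def by blast

text \<open>The witnesses are polynomials of degree at most one, with denominators \<open>1\<close>.\<close>
lemma convex_cone_hull_pencil_poly:
  fixes G :: "((real^'n) \<times> (real^'n)) set"
  assumes K: "real_subfield K" and "finite G" and G: "\<And>a b x. (a, b) \<in> G \<Longrightarrow> a $ x \<in> K \<and> b $ x \<in> K"
  shows "\<exists>(k::nat) (P :: nat \<Rightarrow> 'n \<Rightarrow> real poly) (Q :: nat \<Rightarrow> 'n \<Rightarrow> real poly).
           (\<forall>i<k. \<forall>x. poly_over K (P i x) \<and> poly_over K (Q i x)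
                    \<and> (\<forall>z::real. z > 0 \<longrightarrow> poly (Q i x) z \<noteq> 0)) \<and>
           (\<forall>lam::real. convex_cone hull ((\<lambda>(a, b). a + lam *\<^sub>R b) ` G) =
              {(\<Sum>i<k. c i *\<^sub>R (\<chi> x. poly (P i x) lam / poly (Q i x) lam)) | c. \<forall>i<k. c i \<ge> 0})"
proof -
  obtain k :: nat and g where "G = g ` {i. i < k}"
    using finite_conv_nat_seg_image[THEN iffD1, OF \<open>finite G\<close>] by (elim exE) blast
  then have Gg: "G = g ` {..<k}" by (simp add: lessThan_def)
  define P where "P i x = [:fst (g i) $ x, snd (g i) $ x:]" for i x
  define Q :: "nat \<Rightarrow> 'n \<Rightarrow> real poly" where "Q i x = 1" for i x
  have "poly_over K (P i x) \<and> poly_over K (Q i x)" if "i < k" for i x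
  proof -
    have "fst (g i) $ x \<in> K \<and> snd (g i) $ x \<in> K"
      using G[of "fst (g i)" "snd (g i)" x] that Gg by auto
    moreover have "0 \<in> K" "1 \<in> K" using K by (auto simp: real_subfield_def)
    ultimately show ?thesis
      by (auto simp: poly_over_def P_def Q_def coeff_pCons coeff_1 split: nat.split)
  qed
  moreover have "(\<lambda>(a, b). a + lam *\<^sub>R b) ` G = (\<lambda>i. \<chi> x. poly (P i x) lam / poly (Q i x) lam) ` {..<k}"
    for lam
    unfolding Gg image_image by (intro image_cong) (auto simp: P_def Q_def vec_eq_iff case_prod_beta)
  ultimately show ?thesis
    by (intro exI[of _ k] exI[of _ P] exI[of _ Q]) (simp add: Q_def convex_cone_hull_finite_image)
qed

lemma Dmat_add: "Dmat d (f + g) = Dmat d f + Dmat d g"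
  by (simp add: Dmat_def vec_eq_iff algebra_simps)

lemma Dmat_scaleR: "Dmat d (c *\<^sub>R f) = c *\<^sub>R Dmat d f"
  by (simp add: Dmat_def vec_eq_iff algebra_simps)

lemma inner_axis_diff:
  "(axis x 1 - axis y 1) \<bullet> (g::real^'n) = g $ x - g $ y"
  "g \<bullet> (axis x 1 - axis y 1) = g $ x - g $ y"
  by (simp_all add: inner_diff_left inner_diff_right inner_axis' inner_axis)

definition edge_differences :: "'n::finite set \<Rightarrow> (real^'n) set" where
  "edge_differences e = {axis x 1 - axis y 1 | x y. x \<in> e \<and> y \<in> e}"

lemma Bset_eq: "Bset e = convex hull (edge_differences e)"
  by (simp add: Bset_def edge_differences_def)

lemma finite_edge_differences: "finite (edge_differences e)"
proof -
  have "edge_differences e = (\<lambda>(x, y). axis x 1 - axis y 1) ` (e \<times> e)"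
    unfolding edge_differences_def by auto
  then show ?thesis by simp
qed

text \<open>The vector \<open>f0\<close> represents the order pattern \<open>\<rho>\<close>: \<open>pattern_class\<close> is \<open>U\<^sub>\<rho>\<close> and
  \<open>monotone_cone\<close> is its closure.\<close>
locale ordered_hypergraph =
  fixes E :: "'n::finite set set" and w :: "'n set \<Rightarrow> real" and d :: "'n \<Rightarrow> real"
    and f0 :: "real^'n"
  assumes gen_hypergraph: "is_gen_hypergraph E w d"
begin

definition pattern_class :: "(real^'n) set" where
  "pattern_class = {g. \<forall>x y. sgn (g $ x - g $ y) = sgn (f0 $ x - f0 $ y)}"

definition monotone_cone :: "(real^'n) set" where
  "monotone_cone = {g. \<forall>x y. f0 $ x \<le> f0 $ y \<longrightarrow> g $ x \<le> g $ y}"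

definition top_vertices :: "'n set \<Rightarrow> 'n set" where
  "top_vertices e = {x \<in> e. \<forall>y\<in>e. f0 $ y \<le> f0 $ x}"

definition bottom_vertices :: "'n set \<Rightarrow> 'n set" where
  "bottom_vertices e = {x \<in> e. \<forall>y\<in>e. f0 $ x \<le> f0 $ y}"

definition top_vertex :: "'n set \<Rightarrow> 'n" where
  "top_vertex e = (SOME x. x \<in> top_vertices e)"

definition bottom_vertex :: "'n set \<Rightarrow> 'n" where
  "bottom_vertex e = (SOME x. x \<in> bottom_vertices e)"

definition spread :: "'n set \<Rightarrow> real^'n \<Rightarrow> real" where
  "spread e g = g $ top_vertex e - g $ bottom_vertex e"

definition extremal_differences :: "'n set \<Rightarrow> (real^'n) set" where
  "extremal_differences e = {axis x 1 - axis y 1 | x y. x \<in> top_vertices e \<and> y \<in> bottom_vertices e}"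

definition extremal_face :: "'n set \<Rightarrow> (real^'n) set" where
  "extremal_face e = convex hull (extremal_differences e)"

lemma finite_E: "finite E"
  by (rule finite_subset[of _ UNIV]) auto

lemma top_vertex_in:
  assumes "e \<in> E" shows "top_vertex e \<in> top_vertices e"
proof -
  have "e \<noteq> {}" using gen_hypergraph assms by (auto simp: is_gen_hypergraph_def)
  then have "\<exists>x. x \<in> top_vertices e"
    using finite_ex_max_on[of e "\<lambda>x. f0 $ x"] by (auto simp: top_vertices_def)
  then show ?thesis unfolding top_vertex_def by (rule someI_ex)
qed

lemma bottom_vertex_in:
  assumes "e \<in> E" shows "bottom_vertex e \<in> bottom_vertices e"
proof -
  have "e \<noteq> {}" using gen_hypergraph assms by (auto simp: is_gen_hypergraph_def)
  then have "\<exists>x. x \<in> bottom_vertices e"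
    using finite_ex_min_on[of e "\<lambda>x. f0 $ x"] by (auto simp: bottom_vertices_def)
  then show ?thesis unfolding bottom_vertex_def by (rule someI_ex)
qed

lemma pattern_class_subset_monotone_cone: "pattern_class \<subseteq> monotone_cone"
proof
  fix g assume g: "g \<in> pattern_class"
  have "g $ x \<le> g $ y" if "f0 $ x \<le> f0 $ y" for x y
  proof -
    have "sgn (g $ x - g $ y) = sgn (f0 $ x - f0 $ y)" using g by (simp add: pattern_class_def)
    then show ?thesis
      using that by (cases "f0 $ x < f0 $ y") (auto simp: sgn_1_neg sgn_0_0)
  qed
  then show "g \<in> monotone_cone" by (simp add: monotone_cone_def)
qed

lemma perturbation_in_pattern_class:
  assumes "F \<in> monotone_cone" "\<epsilon> > 0"
  shows "F + \<epsilon> *\<^sub>R f0 \<in> pattern_class"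
proof -
  have "sgn ((F $ x - F $ y) + \<epsilon> * (f0 $ x - f0 $ y)) = sgn (f0 $ x - f0 $ y)" for x y
    using assms by (intro sgn_add_scaled) (auto simp: monotone_cone_def)
  then show ?thesis by (simp add: pattern_class_def algebra_simps)
qed

lemma monotone_cone_top_vertices:
  assumes "g \<in> monotone_cone" "e \<in> E" "x \<in> top_vertices e"
  shows "g $ x = g $ top_vertex e"
  using assms top_vertex_in[OF assms(2)]
  by (auto simp: monotone_cone_def top_vertices_def intro: order.antisym)

lemma monotone_cone_bottom_vertices:
  assumes "g \<in> monotone_cone" "e \<in> E" "x \<in> bottom_vertices e"
  shows "g $ x = g $ bottom_vertex e"
  using assms bottom_vertex_in[OF assms(2)]
  by (auto simp: monotone_cone_def bottom_vertices_def intro: order.antisym)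

lemma spread_nonneg: "g \<in> monotone_cone \<Longrightarrow> e \<in> E \<Longrightarrow> 0 \<le> spread e g"
  using top_vertex_in bottom_vertex_in
  by (fastforce simp: spread_def monotone_cone_def top_vertices_def bottom_vertices_def)

lemma spread_add: "spread e (f + g) = spread e f + spread e g"
  by (simp add: spread_def algebra_simps)

lemma spread_scaleR: "spread e (c *\<^sub>R f) = c * spread e f"
  by (simp add: spread_def algebra_simps)

lemma inner_edge_difference_le_spread:
  assumes "g \<in> monotone_cone" "e \<in> E" "v \<in> edge_differences e"
  shows "v \<bullet> g \<le> spread e g"
proof -
  obtain x y where v: "v = axis x 1 - axis y 1" "x \<in> e" "y \<in> e"
    using assms(3) by (auto simp: edge_differences_def)
  have "g $ x \<le> g $ top_vertex e" "g $ bottom_vertex e \<le> g $ y"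
    using assms(1) v top_vertex_in[OF assms(2)] bottom_vertex_in[OF assms(2)]
    by (auto simp: monotone_cone_def top_vertices_def bottom_vertices_def)
  then show ?thesis by (simp add: v inner_axis_diff spread_def)
qed

lemma inner_Bset_le_spread:
  assumes "g \<in> monotone_cone" "e \<in> E" "b \<in> Bset e"
  shows "b \<bullet> g \<le> spread e g"
proof -
  have "edge_differences e \<subseteq> {b. g \<bullet> b \<le> spread e g}"
    using inner_edge_difference_le_spread[OF assms(1,2)] by (auto simp: inner_commute)
  then have "Bset e \<subseteq> {b. g \<bullet> b \<le> spread e g}"
    unfolding Bset_eq by (rule hull_minimal) (rule convex_halfspace_le)
  then show ?thesis using assms(3) by (auto simp: inner_commute)
qed

lemma inner_extremal_face:
  assumes "g \<in> monotone_cone" "e \<in> E" "b \<in> extremal_face e"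
  shows "b \<bullet> g = spread e g"
proof -
  have "extremal_differences e \<subseteq> {b. g \<bullet> b = spread e g}"
    using monotone_cone_top_vertices[OF assms(1,2)] monotone_cone_bottom_vertices[OF assms(1,2)]
    by (auto simp: extremal_differences_def inner_axis_diff spread_def)
  then have "extremal_face e \<subseteq> {b. g \<bullet> b = spread e g}"
    unfolding extremal_face_def by (rule hull_minimal) (rule convex_hyperplane)
  then show ?thesis using assms(3) by (auto simp: inner_commute)
qed

lemma extremal_differences_subset: "extremal_differences e \<subseteq> edge_differences e"
  by (auto simp: extremal_differences_def edge_differences_def top_vertices_def bottom_vertices_def)

lemma extremal_face_nonempty:
  assumes "e \<in> E" shows "extremal_face e \<noteq> {}"
proof -
  have "axis (top_vertex e) 1 - axis (bottom_vertex e) 1 \<in> extremal_differences e"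
    using top_vertex_in[OF assms] bottom_vertex_in[OF assms] unfolding extremal_differences_def by blast
  then have "axis (top_vertex e) 1 - axis (bottom_vertex e) 1 \<in> extremal_face e"
    unfolding extremal_face_def by (rule hull_inc)
  then show ?thesis by blast
qed

lemma extremal_face_selection: obtains b where "\<forall>e\<in>E. b e \<in> extremal_face e"
proof -
  have "\<forall>e\<in>E. \<exists>z. z \<in> extremal_face e" using extremal_face_nonempty by blast
  then show ?thesis using that bchoice[of E "\<lambda>e z. z \<in> extremal_face e"] by blast
qed

text \<open>For \<open>g\<close> in the pattern class an edge difference \<open>\<delta>\<^sub>x - \<delta>\<^sub>y\<close> attains the spread only when
  \<open>g\<close>, and hence \<open>f0\<close>, is maximal at \<open>x\<close> and minimal at \<open>y\<close> on the edge.\<close>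
lemma edge_difference_attaining_spread:
  assumes "g \<in> pattern_class" "e \<in> E" "v \<in> edge_differences e" "v \<bullet> g = spread e g"
  shows "v \<in> extremal_differences e"
proof -
  obtain x y where v: "v = axis x 1 - axis y 1" "x \<in> e" "y \<in> e"
    using assms(3) by (auto simp: edge_differences_def)
  have g: "g \<in> monotone_cone" using assms(1) pattern_class_subset_monotone_cone by blast
  have "g $ x \<le> g $ top_vertex e" "g $ bottom_vertex e \<le> g $ y"
    using g v top_vertex_in[OF assms(2)] bottom_vertex_in[OF assms(2)]
    by (auto simp: monotone_cone_def top_vertices_def bottom_vertices_def)
  then have "g $ x = g $ top_vertex e" "g $ y = g $ bottom_vertex e"
    using assms(4) by (auto simp: v inner_axis_diff spread_def)
  moreover have "sgn (f0 $ a - f0 $ b) = sgn (g $ a - g $ b)" for a b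
    using assms(1) by (simp add: pattern_class_def)
  ultimately have "sgn (f0 $ x - f0 $ top_vertex e) = 0" "sgn (f0 $ y - f0 $ bottom_vertex e) = 0"
    by simp_all
  then have "f0 $ x = f0 $ top_vertex e" "f0 $ y = f0 $ bottom_vertex e"
    by (simp_all add: sgn_0_0)
  then have "x \<in> top_vertices e" "y \<in> bottom_vertices e"
    using v top_vertex_in[OF assms(2)] bottom_vertex_in[OF assms(2)]
    by (auto simp: top_vertices_def bottom_vertices_def)
  then show ?thesis unfolding extremal_differences_def v by blast
qed

lemma argmaxB_pattern_class:
  assumes "g \<in> pattern_class" "e \<in> E"
  shows "argmaxB e g = extremal_face e"
proof
  have g: "g \<in> monotone_cone" using assms(1) pattern_class_subset_monotone_cone by blast
  have face_sub: "extremal_face e \<subseteq> Bset e"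
    unfolding extremal_face_def Bset_eq by (intro hull_mono extremal_differences_subset)
  show "extremal_face e \<subseteq> argmaxB e g"
    using face_sub inner_extremal_face[OF g assms(2)] inner_Bset_le_spread[OF g assms(2)]
    by (auto simp: argmaxB_def)
  show "argmaxB e g \<subseteq> extremal_face e"
  proof
    fix b assume b: "b \<in> argmaxB e g"
    obtain a where "a \<in> extremal_face e" using extremal_face_nonempty[OF assms(2)] by blast
    then have "spread e g \<le> b \<bullet> g"
      using b face_sub inner_extremal_face[OF g assms(2)] by (force simp: argmaxB_def)
    then have "b \<in> Bset e \<inter> {v. g \<bullet> v = spread e g}"
      using b inner_Bset_le_spread[OF g assms(2)] by (force simp: argmaxB_def inner_commute)
    also have "\<dots> = convex hull (edge_differences e \<inter> {v. g \<bullet> v = spread e g})"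
      unfolding Bset_eq using inner_edge_difference_le_spread[OF g assms(2)]
      by (intro convex_hull_Int_supporting_hyperplane finite_edge_differences) (auto simp: inner_commute)
    also have "\<dots> \<subseteq> extremal_face e"
      unfolding extremal_face_def using edge_difference_attaining_spread[OF assms]
      by (intro hull_mono) (auto simp: inner_commute)
    finally show "b \<in> extremal_face e" .
  qed
qed

definition relaxed_operator :: "real \<Rightarrow> ('n set \<Rightarrow> real^'n) \<Rightarrow> real^'n \<Rightarrow> real^'n" where
  "relaxed_operator lam b F = Dmat d F + lam *\<^sub>R (\<Sum>e\<in>E. w e *\<^sub>R (spread e F *\<^sub>R b e))"

definition relaxed_image :: "real \<Rightarrow> (real^'n) set" where
  "relaxed_image lam = {relaxed_operator lam b F | F b. F \<in> monotone_cone \<and> (\<forall>e\<in>E. b e \<in> extremal_face e)}"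

lemma relaxed_operator_add:
  "relaxed_operator lam b (F + G) = relaxed_operator lam b F + relaxed_operator lam b G"
  by (simp add: relaxed_operator_def Dmat_add spread_add scaleR_add_left scaleR_add_right sum.distrib)

lemma relaxed_operator_scaleR:
  "relaxed_operator lam b (c *\<^sub>R F) = c *\<^sub>R relaxed_operator lam b F"
  by (simp add: relaxed_operator_def Dmat_scaleR spread_scaleR scaleR_add_right scaleR_sum_right
      mult.left_commute)

lemma Gop_pattern_class:
  assumes "f \<in> pattern_class"
  shows "Gop E w d lam f = (\<lambda>b. relaxed_operator lam b f) ` {b. \<forall>e\<in>E. b e \<in> extremal_face e}"
proof -
  have f: "f \<in> monotone_cone" using assms pattern_class_subset_monotone_cone by blast
  have "Lap E w f = (\<lambda>b. \<Sum>e\<in>E. w e *\<^sub>R ((b e \<bullet> f) *\<^sub>R b e)) ` {b. \<forall>e\<in>E. b e \<in> extremal_face e}"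
    unfolding Lap_def setcompr_eq_image using argmaxB_pattern_class[OF assms] by simp
  also have "\<dots> = (\<lambda>b. \<Sum>e\<in>E. w e *\<^sub>R (spread e f *\<^sub>R b e)) ` {b. \<forall>e\<in>E. b e \<in> extremal_face e}"
    using inner_extremal_face[OF f] by (intro image_cong refl sum.cong) auto
  finally show ?thesis
    unfolding Gop_def setcompr_eq_image relaxed_operator_def by (simp add: image_image)
qed

lemma monotone_cone_add: "F \<in> monotone_cone \<Longrightarrow> G \<in> monotone_cone \<Longrightarrow> F + G \<in> monotone_cone"
  by (auto simp: monotone_cone_def intro: add_mono)

lemma monotone_cone_scaleR: "F \<in> monotone_cone \<Longrightarrow> 0 \<le> c \<Longrightarrow> c *\<^sub>R F \<in> monotone_cone"
  by (auto simp: monotone_cone_def intro: mult_left_mono)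

text \<open>Spreads are nonnegative on the monotone cone, so the edge vectors of a sum can be taken
  as convex combinations of those of the summands, weighted by their spreads.\<close>
lemma relaxed_image_add:
  assumes "y1 \<in> relaxed_image lam" "y2 \<in> relaxed_image lam"
  shows "y1 + y2 \<in> relaxed_image lam"
proof -
  obtain F1 b1 where y1: "y1 = relaxed_operator lam b1 F1" and F1: "F1 \<in> monotone_cone"
    and b1: "\<forall>e\<in>E. b1 e \<in> extremal_face e"
    using assms(1) by (auto simp: relaxed_image_def)
  obtain F2 b2 where y2: "y2 = relaxed_operator lam b2 F2" and F2: "F2 \<in> monotone_cone"
    and b2: "\<forall>e\<in>E. b2 e \<in> extremal_face e"
    using assms(2) by (auto simp: relaxed_image_def)
  have "\<exists>z \<in> extremal_face e. spread e (F1 + F2) *\<^sub>R z = spread e F1 *\<^sub>R b1 e + spread e F2 *\<^sub>R b2 e"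
    if e: "e \<in> E" for e
    using convex_weighted_sum[of "extremal_face e" "b1 e" "b2 e" "spread e F1" "spread e F2"]
      b1 b2 e spread_nonneg[OF F1 e] spread_nonneg[OF F2 e] spread_add
    unfolding extremal_face_def by (metis convex_convex_hull)
  then obtain b where b: "\<forall>e\<in>E. b e \<in> extremal_face e"
    and comb: "\<forall>e\<in>E. spread e (F1 + F2) *\<^sub>R b e = spread e F1 *\<^sub>R b1 e + spread e F2 *\<^sub>R b2 e"
    using bchoice[of E "\<lambda>e z. z \<in> extremal_face e \<and>
      spread e (F1 + F2) *\<^sub>R z = spread e F1 *\<^sub>R b1 e + spread e F2 *\<^sub>R b2 e"] by blast
  have "(\<Sum>e\<in>E. w e *\<^sub>R (spread e (F1 + F2) *\<^sub>R b e))
      = (\<Sum>e\<in>E. w e *\<^sub>R (spread e F1 *\<^sub>R b1 e)) + (\<Sum>e\<in>E. w e *\<^sub>R (spread e F2 *\<^sub>R b2 e))"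
    unfolding sum.distrib[symmetric] using comb
    by (intro sum.cong) (simp_all add: scaleR_add_right del: scaleR_scaleR)
  then have "y1 + y2 = relaxed_operator lam b (F1 + F2)"
    by (simp add: y1 y2 relaxed_operator_def Dmat_add scaleR_add_right algebra_simps)
  then show ?thesis using b monotone_cone_add[OF F1 F2] by (auto simp: relaxed_image_def)
qed

lemma convex_cone_relaxed_image: "convex_cone (relaxed_image lam)"
proof -
  obtain b where b: "\<forall>e\<in>E. b e \<in> extremal_face e" by (rule extremal_face_selection)
  have "0 \<in> monotone_cone" by (simp add: monotone_cone_def)
  moreover have "relaxed_operator lam b 0 = 0"
    using relaxed_operator_scaleR[of lam b 0 0] by simp
  ultimately have "0 \<in> relaxed_image lam" using b unfolding relaxed_image_def by force
  moreover have "c *\<^sub>R y \<in> relaxed_image lam" if y: "y \<in> relaxed_image lam" and c: "0 \<le> c" for y c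
  proof -
    obtain F b' where "y = relaxed_operator lam b' F" "F \<in> monotone_cone"
      "\<forall>e\<in>E. b' e \<in> extremal_face e"
      using y unfolding relaxed_image_def by blast
    moreover have "c *\<^sub>R relaxed_operator lam b' F = relaxed_operator lam b' (c *\<^sub>R F)"
      by (simp add: relaxed_operator_scaleR)
    ultimately show ?thesis
      using monotone_cone_scaleR[OF _ c] unfolding relaxed_image_def by blast
  qed
  ultimately show ?thesis
    using relaxed_image_add by (auto simp: convex_cone_iff)
qed

lemma Gop_subset_relaxed_image:
  "(\<Union>f\<in>pattern_class. Gop E w d lam f) \<subseteq> relaxed_image lam"
  using pattern_class_subset_monotone_cone by (auto simp: Gop_pattern_class relaxed_image_def)

text \<open>Perturbing \<open>F\<close> towards \<open>f0\<close> moves it into the pattern class without changing the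
  edge vectors.\<close>
lemma relaxed_image_subset_closure:
  "relaxed_image lam \<subseteq> closure (\<Union>f\<in>pattern_class. Gop E w d lam f)"
proof
  fix y assume "y \<in> relaxed_image lam"
  then obtain F b where y: "y = relaxed_operator lam b F" and F: "F \<in> monotone_cone"
    and b: "\<forall>e\<in>E. b e \<in> extremal_face e"
    by (auto simp: relaxed_image_def)
  define q where "q = relaxed_operator lam b f0"
  have "y + \<epsilon> *\<^sub>R q \<in> (\<Union>f\<in>pattern_class. Gop E w d lam f)" if \<epsilon>: "\<epsilon> > 0" for \<epsilon>
  proof -
    have "F + \<epsilon> *\<^sub>R f0 \<in> pattern_class" using perturbation_in_pattern_class[OF F \<epsilon>] .
    moreover have "y + \<epsilon> *\<^sub>R q = relaxed_operator lam b (F + \<epsilon> *\<^sub>R f0)"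
      by (simp add: y q_def relaxed_operator_add relaxed_operator_scaleR)
    ultimately show ?thesis using b by (auto simp: Gop_pattern_class)
  qed
  then have "\<forall>\<^sub>F \<epsilon> in at_right 0. y + \<epsilon> *\<^sub>R q \<in> closure (\<Union>f\<in>pattern_class. Gop E w d lam f)"
    using closure_subset by (intro eventually_mono[OF eventually_at_right_less]) blast
  moreover have "((\<lambda>\<epsilon>. y + \<epsilon> *\<^sub>R q) \<longlongrightarrow> y + (0::real) *\<^sub>R q) (at_right 0)"
    by (intro tendsto_intros)
  ultimately show "y \<in> closure (\<Union>f\<in>pattern_class. Gop E w d lam f)"
    by (intro Lim_in_closed_set[OF closed_closure]) (simp_all add: trivial_limit_at_right_real)
qed

definition upper_indicator :: "'n \<Rightarrow> real^'n" where
  "upper_indicator x = (\<chi> y. if f0 $ x \<le> f0 $ y then 1 else 0)"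

lemma peel_upper_indicator:
  assumes g: "g \<in> monotone_cone" "\<forall>x. 0 \<le> g $ x"
    and x1: "g $ x1 \<noteq> 0" and low: "\<forall>y. g $ y \<noteq> 0 \<longrightarrow> f0 $ x1 \<le> f0 $ y"
  defines "g' \<equiv> g - g $ x1 *\<^sub>R upper_indicator x1"
  shows "g' \<in> monotone_cone" "\<forall>y. 0 \<le> g' $ y" "{y. g' $ y \<noteq> 0} \<subset> {y. g $ y \<noteq> 0}"
proof -
  have pos: "0 < g $ x1" using g(2) x1 by (metis order.not_eq_order_implies_strict)
  have upper: "f0 $ x1 \<le> f0 $ y \<longleftrightarrow> g $ y \<noteq> 0" for y
  proof
    assume "f0 $ x1 \<le> f0 $ y"
    then have "g $ x1 \<le> g $ y" using g(1) by (simp add: monotone_cone_def)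
    then show "g $ y \<noteq> 0" using pos by simp
  qed (use low in blast)
  have g': "g' $ y = (if g $ y \<noteq> 0 then g $ y - g $ x1 else 0)" for y
    using upper[of y] by (auto simp: g'_def upper_indicator_def)
  show nonneg: "\<forall>y. 0 \<le> g' $ y"
    using g' g(1) upper by (auto simp: monotone_cone_def)
  have "g' $ y \<le> g' $ z" if "f0 $ y \<le> f0 $ z" for y z
  proof (cases "g $ y \<noteq> 0")
    case True
    then have "g $ z \<noteq> 0" using upper that by (meson order.trans)
    then show ?thesis using True g' g(1) that by (simp add: monotone_cone_def)
  next
    case False
    then show ?thesis using g' nonneg by simp
  qed
  then show "g' \<in> monotone_cone" by (simp add: monotone_cone_def)
  show "{y. g' $ y \<noteq> 0} \<subset> {y. g $ y \<noteq> 0}"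
    using x1 g' by auto
qed

lemma nonneg_monotone_in_indicator_hull:
  assumes "g \<in> monotone_cone" "\<forall>x. 0 \<le> g $ x"
  shows "g \<in> convex_cone hull (range upper_indicator)"
  using assms
proof (induction "card {x. g $ x \<noteq> 0}" arbitrary: g rule: less_induct)
  case less
  show ?case
  proof (cases "\<exists>x. g $ x \<noteq> 0")
    case False
    then have "g = 0" by (auto simp: vec_eq_iff)
    then show ?thesis by (simp add: convex_cone_hull_contains_0)
  next
    case True
    then obtain x1 where x1: "g $ x1 \<noteq> 0" and low: "\<forall>y. g $ y \<noteq> 0 \<longrightarrow> f0 $ x1 \<le> f0 $ y"
      using finite_ex_min_on[of "{x. g $ x \<noteq> 0}" "\<lambda>x. f0 $ x"] by auto
    note peel = peel_upper_indicator[OF less.prems x1 low]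
    have "card {y. (g - g $ x1 *\<^sub>R upper_indicator x1) $ y \<noteq> 0} < card {x. g $ x \<noteq> 0}"
      using peel(3) by (intro psubset_card_mono) auto
    then have "g - g $ x1 *\<^sub>R upper_indicator x1 \<in> convex_cone hull (range upper_indicator)"
      using less.hyps peel(1,2) by blast
    moreover have "g $ x1 *\<^sub>R upper_indicator x1 \<in> convex_cone hull (range upper_indicator)"
      using less.prems(2) by (intro convex_cone_hull_mul hull_inc) auto
    ultimately show ?thesis
      using convex_cone_hull_add by fastforce
  qed
qed

lemma monotone_cone_subset_hull:
  "monotone_cone \<subseteq> convex_cone hull (insert 1 (insert (- 1) (range upper_indicator)))"
    (is "_ \<subseteq> convex_cone hull ?S")
proof
  fix F assume F: "F \<in> monotone_cone"
  define c where "c = Min (range (\<lambda>x. F $ x))"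
  have "F - c *\<^sub>R 1 \<in> convex_cone hull (range upper_indicator)"
    using F by (intro nonneg_monotone_in_indicator_hull) (auto simp: monotone_cone_def c_def)
  then have "F - c *\<^sub>R 1 \<in> convex_cone hull ?S"
    by (rule subsetD[OF hull_mono, rotated]) auto
  moreover have "c *\<^sub>R 1 \<in> convex_cone hull ?S"
  proof (cases "0 \<le> c")
    case True
    then show ?thesis by (intro convex_cone_hull_mul hull_inc) auto
  next
    case False
    then have "(- c) *\<^sub>R (- 1) \<in> convex_cone hull ?S"
      by (intro convex_cone_hull_mul hull_inc) auto
    then show ?thesis by simp
  qed
  ultimately show "F \<in> convex_cone hull ?S"
    using convex_cone_hull_add by fastforce
qed

definition generator :: "'n \<Rightarrow> ('n set \<Rightarrow> real^'n) \<Rightarrow> (real^'n) \<times> (real^'n)" where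
  "generator x p =
     (Dmat d (upper_indicator x), \<Sum>e\<in>E. (w e * spread e (upper_indicator x)) *\<^sub>R p e)"

definition generators :: "((real^'n) \<times> (real^'n)) set" where
  "generators = insert (Dmat d 1, 0) (insert (- Dmat d 1, 0)
     (case_prod generator ` (UNIV \<times> PiE E extremal_differences)))"

abbreviation pencil :: "real \<Rightarrow> (real^'n) \<times> (real^'n) \<Rightarrow> real^'n" where
  "pencil lam \<equiv> \<lambda>(a, b). a + lam *\<^sub>R b"

lemma finite_generators: "finite generators"
proof -
  have "finite (extremal_differences e)" for e
    using finite_edge_differences extremal_differences_subset by (rule finite_subset[rotated])
  then show ?thesis unfolding generators_def using finite_E by (simp add: finite_PiE)
qed

lemma upper_indicator_in_monotone_cone: "upper_indicator x \<in> monotone_cone"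
  by (auto simp: monotone_cone_def upper_indicator_def)

lemma spread_one: "spread e 1 = 0"
  by (simp add: spread_def)

lemma relaxed_operator_one: "relaxed_operator lam b 1 = Dmat d 1"
  by (simp add: relaxed_operator_def spread_one)

lemma relaxed_operator_uminus: "relaxed_operator lam b (- F) = - relaxed_operator lam b F"
  using relaxed_operator_scaleR[of lam b "- 1" F] by simp

lemma pencil_generators_subset_relaxed_image: "pencil lam ` generators \<subseteq> relaxed_image lam"
proof -
  obtain b where b: "\<forall>e\<in>E. b e \<in> extremal_face e" by (rule extremal_face_selection)
  have "- 1 \<in> monotone_cone" "(1 :: real^'n) \<in> monotone_cone" by (simp_all add: monotone_cone_def)
  then have "Dmat d 1 \<in> relaxed_image lam" "- Dmat d 1 \<in> relaxed_image lam"
    using b relaxed_operator_one[of lam b] relaxed_operator_uminus[of lam b 1]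
    unfolding relaxed_image_def by force+
  then have "pencil lam (Dmat d 1, 0) \<in> relaxed_image lam" "pencil lam (- Dmat d 1, 0) \<in> relaxed_image lam"
    by simp_all
  moreover have "pencil lam q \<in> relaxed_image lam"
    if gen: "q \<in> case_prod generator ` (UNIV \<times> PiE E extremal_differences)" for q
  proof -
    obtain x p where q: "q = generator x p" and "p \<in> PiE E extremal_differences" using gen by auto
    have "\<forall>e\<in>E. p e \<in> extremal_face e"
      using \<open>p \<in> PiE E extremal_differences\<close> unfolding extremal_face_def by (auto intro: hull_inc)
    moreover have "pencil lam (generator x p) = relaxed_operator lam p (upper_indicator x)"
      by (simp add: generator_def relaxed_operator_def)
    ultimately show ?thesis
      using upper_indicator_in_monotone_cone unfolding relaxed_image_def q by blast
  qed
  ultimately show ?thesis unfolding generators_def by blast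
qed

lemma relaxed_operator_upper_indicator_in_hull:
  assumes "\<forall>e\<in>E. b e \<in> extremal_face e"
  shows "relaxed_operator lam b (upper_indicator x) \<in> convex hull (pencil lam ` generators)"
proof -
  define a where "a = Dmat d (upper_indicator x)"
  define s where "s e = w e * spread e (upper_indicator x)" for e
  have "(\<Sum>e\<in>E. s e *\<^sub>R b e) \<in> convex hull ((\<lambda>p. \<Sum>e\<in>E. s e *\<^sub>R p e) ` PiE E extremal_differences)"
    using assms unfolding extremal_face_def by (intro sum_scaled_in_convex_hull_PiE finite_E) auto
  then have "a + lam *\<^sub>R (\<Sum>e\<in>E. s e *\<^sub>R b e)
      \<in> (\<lambda>u. a + lam *\<^sub>R u) ` (convex hull ((\<lambda>p. \<Sum>e\<in>E. s e *\<^sub>R p e) ` PiE E extremal_differences))"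
    by (rule imageI)
  also have "\<dots> = convex hull ((\<lambda>p. a + lam *\<^sub>R (\<Sum>e\<in>E. s e *\<^sub>R p e)) ` PiE E extremal_differences)"
    by (simp only: convex_hull_affinity[symmetric] image_image)
  also have "\<dots> \<subseteq> convex hull (pencil lam ` generators)"
    by (intro hull_mono) (force simp: generators_def generator_def a_def s_def)
  finally show ?thesis
    by (simp add: relaxed_operator_def a_def s_def)
qed

text \<open>With the edge vectors fixed the operator is linear, so it suffices to map the generators
  of the monotone cone.\<close>
lemma relaxed_image_subset_hull: "relaxed_image lam \<subseteq> convex_cone hull (pencil lam ` generators)"
proof
  fix y assume "y \<in> relaxed_image lam"
  then obtain F b where y: "y = relaxed_operator lam b F" and F: "F \<in> monotone_cone"
    and b: "\<forall>e\<in>E. b e \<in> extremal_face e"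
    unfolding relaxed_image_def by blast
  have lin: "linear (relaxed_operator lam b)"
    by (rule linearI) (simp_all add: relaxed_operator_add relaxed_operator_scaleR)
  have "relaxed_operator lam b ` insert 1 (insert (- 1) (range upper_indicator))
      \<subseteq> convex_cone hull (pencil lam ` generators)"
  proof -
    have "Dmat d 1 \<in> pencil lam ` generators" "- Dmat d 1 \<in> pencil lam ` generators"
      unfolding generators_def by force+
    then have "relaxed_operator lam b 1 \<in> convex_cone hull (pencil lam ` generators)"
      "relaxed_operator lam b (- 1) \<in> convex_cone hull (pencil lam ` generators)"
      by (simp_all add: relaxed_operator_one relaxed_operator_uminus hull_inc)
    moreover have "relaxed_operator lam b (upper_indicator x) \<in> convex_cone hull (pencil lam ` generators)"
      for x
      using relaxed_operator_upper_indicator_in_hull[OF b]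
        convex_hull_subset_convex_cone_hull[of "pencil lam ` generators"] by blast
    ultimately show ?thesis by blast
  qed
  then have "convex_cone hull (relaxed_operator lam b ` insert 1 (insert (- 1) (range upper_indicator)))
      \<subseteq> convex_cone hull (pencil lam ` generators)"
    by (intro hull_minimal convex_cone_convex_cone_hull)
  then show "y \<in> convex_cone hull (pencil lam ` generators)"
    unfolding convex_cone_hull_linear_image[OF lin] y
    using monotone_cone_subset_hull F by blast
qed

lemma closure_Gop_pattern_class:
  "closure (\<Union>f\<in>pattern_class. Gop E w d lam f) = convex_cone hull (pencil lam ` generators)"
proof
  show "closure (\<Union>f\<in>pattern_class. Gop E w d lam f) \<subseteq> convex_cone hull (pencil lam ` generators)"
    using Gop_subset_relaxed_image relaxed_image_subset_hull finite_generators
    by (intro closure_minimal closed_convex_cone_hull) auto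
  show "convex_cone hull (pencil lam ` generators) \<subseteq> closure (\<Union>f\<in>pattern_class. Gop E w d lam f)"
    using hull_minimal[where S=convex_cone, OF pencil_generators_subset_relaxed_image convex_cone_relaxed_image]
      relaxed_image_subset_closure by (rule order.trans)
qed

lemma generators_in_Kfield:
  assumes "(a, b) \<in> generators"
  shows "a $ x \<in> Kfield E w d \<and> b $ x \<in> Kfield E w d"
proof -
  let ?K = "Kfield E w d"
  have K: "real_subfield ?K" by (rule real_subfield_Kfield)
  have Z: "r \<in> ?K" if "r \<in> \<int>" for r using real_subfield_Ints[OF K that] .
  have mult: "r * s \<in> ?K" if "r \<in> ?K" "s \<in> ?K" for r s using K that by (simp add: real_subfield_def)
  have "d x \<in> ?K" by (rule vertex_weight_in_Kfield)
  consider "(a, b) = (Dmat d 1, 0)" | "(a, b) = (- Dmat d 1, 0)"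
    | y p where "p \<in> PiE E extremal_differences" "(a, b) = generator y p"
    using assms unfolding generators_def by auto
  then show ?thesis
  proof cases
    case 1
    then show ?thesis using \<open>d x \<in> ?K\<close> Z[of 0] by (simp add: Dmat_def)
  next
    case 2
    then show ?thesis using \<open>d x \<in> ?K\<close> Z[of 0] K by (simp add: Dmat_def real_subfield_def)
  next
    case (3 y p)
    have ind: "upper_indicator y $ z \<in> \<int>" for z by (simp add: upper_indicator_def)
    have "p e $ x \<in> \<int>" if e: "e \<in> E" for e
    proof -
      have "p e \<in> extremal_differences e" using 3(1) e by (simp add: PiE_iff)
      then obtain u v :: 'n where "p e = axis u 1 - axis v 1"
        unfolding extremal_differences_def by blast
      then show ?thesis by (simp add: axis_def)
    qed
    then have "(w e * spread e (upper_indicator y)) * p e $ x \<in> ?K" if "e \<in> E" for e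
      using that ind by (intro mult edge_weight_in_Kfield Z) (auto simp: spread_def)
    then have "b $ x \<in> ?K"
      using 3(2) by (auto simp: generator_def sum_component intro: real_subfield_sum[OF K])
    moreover have "a $ x \<in> ?K"
      using 3(2) mult[OF \<open>d x \<in> ?K\<close> Z[OF ind]] by (simp add: generator_def Dmat_def)
    ultimately show ?thesis by blast
  qed
qed

end

theorem mainTheorem18:
  fixes E :: "'n::finite set set" and w :: "'n set \<Rightarrow> real" and d :: "'n \<Rightarrow> real"
  assumes "is_gen_hypergraph E w d"
    and "U \<in> (order_classes :: (real^'n) set set)"
  shows "\<exists>(k::nat) (P :: nat \<Rightarrow> 'n \<Rightarrow> real poly) (Q :: nat \<Rightarrow> 'n \<Rightarrow> real poly).
           (\<forall>i<k. \<forall>x. poly_over (Kfield E w d) (P i x) \<and> poly_over (Kfield E w d) (Q i x)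
                    \<and> (\<forall>z::real. z > 0 \<longrightarrow> poly (Q i x) z \<noteq> 0)) \<and>
           (\<forall>lam::real. lam > 0 \<longrightarrow>
              closure (\<Union>f\<in>U. Gop E w d lam f) =
              {(\<Sum>i<k. c i *\<^sub>R (\<chi> x. poly (P i x) lam / poly (Q i x) lam)) | c. \<forall>i<k. c i \<ge> 0})"
proof -
  obtain f0 :: "real^'n" where U: "U = {g. \<forall>x y. sgn (g $ x - g $ y) = sgn (f0 $ x - f0 $ y)}"
    using assms(2) unfolding order_classes_def by blast
  interpret ordered_hypergraph E w d f0 by unfold_locales (rule assms(1))
  have "U = pattern_class" unfolding U pattern_class_def ..
  have "\<And>a b x. (a, b) \<in> generators \<Longrightarrow> a $ x \<in> Kfield E w d \<and> b $ x \<in> Kfield E w d"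
    by (rule generators_in_Kfield)
  from convex_cone_hull_pencil_poly[OF real_subfield_Kfield finite_generators this]
  show ?thesis
    unfolding \<open>U = pattern_class\<close> closure_Gop_pattern_class by blast
qed

end
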